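(* For every $d\in\mathbb N$ and every subset $A\subseteq\mathbb R^d$, one has $\operatorname{ch}A=\operatorname{conv}A$; equivalently, every convex subset of $\mathbb R^d$ is a Choquet set.
   Context: Let $V$ be a Banach space (here $V=\mathbb R^d$) with Borel $\sigma$-algebra $\mathcal B(V)$ and dual $V^*$. A Borel probability measure $\mu$ on $V$ has a barycenter if there is $y\in V$ with $L(y)=\int_V L(x)\,\mu(dx)$ for all $L\in V^*$; this $y$ is unique and is denoted $r(\mu)=\int_V x\,\mu(dx)$. For a Borel set $A\subseteq V$, $\mathcal M(A)$ is the set of regular Borel probability measures $\mu$ on $V$ with $\mu(A)=1$ that have a barycenter; for an arbitrary $A\subseteq V$, $\mathcal M(A)=\bigcup\{\mathcal M(B): B\subseteq A,\ B\in\mathcal B(V)\}$. A point $r(\mu)$ with $\mu\in\mathcal M(A)$ is a Choquet combination of points of $A$. $A$ is a Choquet set if $r(\mu)\in A$ for every $\mu\in\mathcal M(A)$. The Choquet hull $\operatorname{ch}A$ is the intersection of all Choquet sets containing $A$ (the smallest Choquet set containing $A$). *)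

theory Defs
  imports "HOL-Analysis.Analysis"
begin

definition has_barycenter :: "'a::real_normed_vector measure \<Rightarrow> 'a \<Rightarrow> bool" where
  "has_barycenter M y \<longleftrightarrow>
     (\<forall>L::'a \<Rightarrow> real. bounded_linear L \<longrightarrow> integrable M L \<and> L y = (\<integral>x. L x \<partial>M))"

definition barycenter :: "'a::real_normed_vector measure \<Rightarrow> 'a" where
  "barycenter M = (THE y. has_barycenter M y)"

definition regular_measure :: "'a::topological_space measure \<Rightarrow> bool" where
  "regular_measure M \<longleftrightarrow>
     (\<forall>B\<in>sets borel.
        emeasure M B = (SUP K\<in>{K. compact K \<and> K \<subseteq> B}. emeasure M K) \<and>
        emeasure M B = (INF U\<in>{U. open U \<and> B \<subseteq> U}. emeasure M U))"

definition choquet_measures :: "'a::real_normed_vector set \<Rightarrow> 'a measure set" where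
  "choquet_measures A =
     {M. sets M = sets borel \<and> emeasure M (space M) = 1 \<and> regular_measure M \<and>
         (\<exists>B\<in>sets borel. B \<subseteq> A \<and> emeasure M B = 1) \<and>
         (\<exists>y. has_barycenter M y)}"

definition choquet_set :: "'a::real_normed_vector set \<Rightarrow> bool" where
  "choquet_set A \<longleftrightarrow> (\<forall>M\<in>choquet_measures A. barycenter M \<in> A)"

definition choquet_hull :: "'a::real_normed_vector set \<Rightarrow> 'a set" where
  "choquet_hull A = \<Inter>{C. choquet_set C \<and> A \<subseteq> C}"

end

theory Submission
  imports Defs "HOL-Probability.Probability"
begin

text \<open>The measure \<open>(1 - u) \<delta>\<^sub>x + u \<delta>\<^sub>y\<close> has barycenter \<open>(1 - u) x + u y\<close>, so Choquet sets are
  convex. Conversely, let \<open>\<mu>\<close> be a probability measure concentrated on a convex set \<open>C\<close>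
  with barycenter \<open>y \<notin> C\<close>. If \<open>y\<close> lies outside the closure of \<open>C\<close>, a separating hyperplane
  makes the integral of some linear functional differ from its value at \<open>y\<close>. Otherwise a
  supporting hyperplane \<open>a \<bullet> x \<ge> a \<bullet> y\<close> at \<open>y\<close> has \<open>a \<bullet> x - a \<bullet> y\<close> nonnegative with integral
  zero, so \<open>\<mu>\<close> is concentrated on the proper face of \<open>C\<close> cut out by the hyperplane; induction on
  the affine dimension puts \<open>y\<close> into that face.\<close>

lemma has_barycenter_inner:
  fixes M :: "'a::real_inner measure"
  assumes "has_barycenter M y"
  shows "integrable M (\<lambda>x. a \<bullet> x)" and "a \<bullet> y = (\<integral>x. a \<bullet> x \<partial>M)"
  using assms bounded_linear_inner_right unfolding has_barycenter_def by blast+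

lemma barycenter_eqI:
  fixes M :: "'a::real_inner measure"
  assumes "has_barycenter M y"
  shows "barycenter M = y"
  unfolding barycenter_def
proof (rule the_equality)
  fix z assume "has_barycenter M z"
  then have "(z - y) \<bullet> z = (z - y) \<bullet> y"
    using has_barycenter_inner(2)[OF assms] has_barycenter_inner(2) by simp
  then have "(z - y) \<bullet> (z - y) = 0"
    by (simp add: inner_diff_right)
  then show "z = y"
    by simp
qed (fact assms)

lemma finite_borel_measure_regular:
  fixes M :: "'a::{second_countable_topology, complete_space} measure"
  assumes "sets M = sets borel" and "emeasure M (space M) \<noteq> \<infinity>"
  shows "regular_measure M"
  unfolding regular_measure_def
proof (intro ballI conjI)
  fix B :: "'a set" assume "B \<in> sets borel"
  then show "emeasure M B = (SUP K\<in>{K. compact K \<and> K \<subseteq> B}. emeasure M K)"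
    and "emeasure M B = (INF U\<in>{U. open U \<and> B \<subseteq> U}. emeasure M U)"
    using inner_regular[OF assms] outer_regular[OF assms] by (simp_all only: conj_commute)
qed

definition two_point_measure :: "'a::real_normed_vector \<Rightarrow> 'a \<Rightarrow> real \<Rightarrow> 'a measure" where
  "two_point_measure x y u = distr (measure_pmf (bernoulli_pmf u)) borel (\<lambda>b. if b then y else x)"

lemma
  shows sets_two_point_measure: "sets (two_point_measure x y u) = sets borel"
    and emeasure_two_point_measure_space:
      "emeasure (two_point_measure x y u) (space (two_point_measure x y u)) = 1"
    and emeasure_two_point_measure_support: "emeasure (two_point_measure x y u) {x, y} = 1"
  unfolding two_point_measure_def
  by (simp_all add: emeasure_distr borel_closed vimage_def measure_pmf.emeasure_space_1)

lemma has_barycenter_two_point_measure: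
  fixes x y :: "'a::real_normed_vector"
  assumes "0 \<le> u" "u \<le> 1"
  shows "has_barycenter (two_point_measure x y u) ((1 - u) *\<^sub>R x + u *\<^sub>R y)"
  unfolding has_barycenter_def
proof (intro allI impI conjI)
  define f where "f = (\<lambda>b. if b then y else x)"
  let ?P = "measure_pmf (bernoulli_pmf u)"
  have M: "two_point_measure x y u = distr ?P borel f"
    unfolding two_point_measure_def f_def ..
  have f_measurable: "f \<in> ?P \<rightarrow>\<^sub>M borel" by simp
  fix L :: "'a \<Rightarrow> real" assume L: "bounded_linear L"
  then have L_measurable: "L \<in> borel_measurable borel"
    by (simp add: borel_measurable_continuous_onI linear_continuous_on)
  show "integrable (two_point_measure x y u) L"
    unfolding M integrable_distr_eq[OF f_measurable L_measurable]
    by (rule integrable_measure_pmf_finite) simp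
  have "(\<integral>z. L z \<partial>two_point_measure x y u) = (\<integral>b. L (f b) \<partial>?P)"
    unfolding M by (rule integral_distr[OF f_measurable L_measurable])
  also have "\<dots> = (1 - u) * L x + u * L y"
    using assms by (simp add: f_def algebra_simps)
  also have "\<dots> = L ((1 - u) *\<^sub>R x + u *\<^sub>R y)"
    using L by (simp add: bounded_linear.linear linear_add linear_scale)
  finally show "L ((1 - u) *\<^sub>R x + u *\<^sub>R y) = (\<integral>z. L z \<partial>two_point_measure x y u)" ..
qed

lemma two_point_measure_in_choquet_measures:
  fixes x y :: "'a::{real_normed_vector, second_countable_topology, complete_space}"
  assumes "x \<in> A" "y \<in> A" "0 \<le> u" "u \<le> 1"
  shows "two_point_measure x y u \<in> choquet_measures A"
  unfolding choquet_measures_def mem_Collect_eq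
proof (intro conjI bexI[of _ "{x, y}"] exI)
  show "regular_measure (two_point_measure x y u)"
    by (rule finite_borel_measure_regular)
      (simp_all add: sets_two_point_measure emeasure_two_point_measure_space)
  show "has_barycenter (two_point_measure x y u) ((1 - u) *\<^sub>R x + u *\<^sub>R y)"
    using assms(3,4) by (rule has_barycenter_two_point_measure)
  show "{x, y} \<in> sets borel" "{x, y} \<subseteq> A"
    using assms(1,2) by (simp_all add: borel_closed)
qed (simp_all add: sets_two_point_measure emeasure_two_point_measure_space
       emeasure_two_point_measure_support)

lemma choquet_set_imp_convex:
  fixes C :: "'a::{real_inner, second_countable_topology, complete_space} set"
  assumes "choquet_set C"
  shows "convex C"
  unfolding convex_alt
proof (intro ballI allI impI)
  fix x y and u :: real assume "x \<in> C" "y \<in> C" "0 \<le> u \<and> u \<le> 1"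
  then have "two_point_measure x y u \<in> choquet_measures C"
    by (simp add: two_point_measure_in_choquet_measures)
  with assms have "barycenter (two_point_measure x y u) \<in> C"
    unfolding choquet_set_def by blast
  moreover have "barycenter (two_point_measure x y u) = (1 - u) *\<^sub>R x + u *\<^sub>R y"
    using \<open>0 \<le> u \<and> u \<le> 1\<close> by (intro barycenter_eqI has_barycenter_two_point_measure) auto
  ultimately show "(1 - u) *\<^sub>R x + u *\<^sub>R y \<in> C"
    by simp
qed

lemma inner_barycenter_ge:
  fixes M :: "'a::real_inner measure"
  assumes "prob_space M" "has_barycenter M y" and "AE x in M. b \<le> a \<bullet> x"
  shows "b \<le> a \<bullet> y"
  using prob_space.integral_ge_const[OF assms(1) has_barycenter_inner(1)[OF assms(2)] assms(3)]
    has_barycenter_inner(2)[OF assms(2)] by simp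

lemma AE_inner_eq_barycenter:
  fixes M :: "'a::real_inner measure"
  assumes "prob_space M" "has_barycenter M y" and "AE x in M. a \<bullet> y \<le> a \<bullet> x"
  shows "AE x in M. a \<bullet> x = a \<bullet> y"
proof -
  interpret prob_space M by fact
  have "integrable M (\<lambda>x. a \<bullet> x)" and "a \<bullet> y = (\<integral>x. a \<bullet> x \<partial>M)"
    using has_barycenter_inner[OF assms(2), where a=a] by simp_all
  then have "integrable M (\<lambda>x. a \<bullet> x - a \<bullet> y)" and "(\<integral>x. a \<bullet> x - a \<bullet> y \<partial>M) = 0"
    by (simp_all add: prob_space)
  moreover have "AE x in M. 0 \<le> a \<bullet> x - a \<bullet> y"
    using assms(3) by simp
  ultimately show ?thesis
    by (simp add: integral_nonneg_eq_0_iff_AE)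
qed

lemma has_barycenter_mem_closure:
  fixes C :: "'a::euclidean_space set"
  assumes "prob_space M" "convex C" "AE x in M. x \<in> C" "has_barycenter M y"
  shows "y \<in> closure C"
proof (rule ccontr)
  assume "y \<notin> closure C"
  then obtain a b where "a \<bullet> y < b" "\<forall>x\<in>closure C. b < a \<bullet> x"
    using separating_hyperplane_closed_point[OF convex_closure[OF assms(2)]] by blast
  moreover have "AE x in M. b \<le> a \<bullet> x"
    using assms(3) by eventually_elim (use calculation closure_subset in force)
  ultimately show False
    using inner_barycenter_ge[OF assms(1,4)] by force
qed

lemma has_barycenter_AE_in_proper_face:
  fixes C :: "'a::euclidean_space set"
  assumes "prob_space M" "convex C" "AE x in M. x \<in> C" "has_barycenter M y"
    and "y \<notin> rel_interior C"
  obtains F where "F face_of C" "F \<noteq> C" "AE x in M. x \<in> F"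
proof -
  obtain a where a: "\<And>z. z \<in> closure C \<Longrightarrow> a \<bullet> y \<le> a \<bullet> z"
    "\<And>z. z \<in> rel_interior C \<Longrightarrow> a \<bullet> y < a \<bullet> z"
    using supporting_hyperplane_relative_frontier[OF assms(2) has_barycenter_mem_closure[OF assms(1-4)] assms(5)]
    by metis
  define F where "F = C \<inter> {x. a \<bullet> x = a \<bullet> y}"
  have "C \<inter> {x. a \<bullet> x = a \<bullet> y} exposed_face_of C"
    by (rule exposed_face_of_Int_supporting_hyperplane_ge[OF assms(2)]) (use a(1) closure_subset in blast)
  then have face: "F face_of C"
    unfolding F_def exposed_face_of_def by (elim conjE)
  have "C \<noteq> {}"
    using assms(3) prob_space.AE_False[OF assms(1)] by auto
  then obtain z where z: "z \<in> rel_interior C"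
    using rel_interior_eq_empty[OF assms(2)] by blast
  then have "z \<in> C - F"
    using a(2)[OF z] rel_interior_subset unfolding F_def by auto
  then have proper: "F \<noteq> C"
    by blast
  have "AE x in M. a \<bullet> y \<le> a \<bullet> x"
    using assms(3) by eventually_elim (use a(1) closure_subset in blast)
  then have "AE x in M. a \<bullet> x = a \<bullet> y"
    by (rule AE_inner_eq_barycenter[OF assms(1,4)])
  with assms(3) have "AE x in M. x \<in> F"
    unfolding F_def by eventually_elim simp
  with face proper show thesis
    by (rule that)
qed

lemma has_barycenter_mem_convex:
  fixes C :: "'a::euclidean_space set"
  assumes "prob_space M" "convex C" "AE x in M. x \<in> C" "has_barycenter M y"
  shows "y \<in> C"
  using assms(2,3)
proof (induction "nat (aff_dim C + 1)" arbitrary: C rule: less_induct)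
  case (less C)
  show "y \<in> C"
  proof (cases "y \<in> rel_interior C")
    case False
    with less.prems obtain F where F: "F face_of C" "F \<noteq> C" "AE x in M. x \<in> F"
      using has_barycenter_AE_in_proper_face[OF assms(1) _ _ assms(4)] by blast
    have "aff_dim F < aff_dim C"
      using face_of_aff_dim_lt[OF less.prems(1) F(1,2)] .
    then have "nat (aff_dim F + 1) < nat (aff_dim C + 1)"
      using aff_dim_geq[of F] by linarith
    then have "y \<in> F"
      using less.hyps face_of_imp_convex[OF F(1)] F(3) by blast
    then show ?thesis
      using face_of_imp_subset[OF F(1)] by blast
  qed (use rel_interior_subset in blast)
qed

lemma convex_imp_choquet_set:
  fixes C :: "'a::euclidean_space set"
  assumes "convex C"
  shows "choquet_set C"
  unfolding choquet_set_def
proof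
  fix M assume "M \<in> choquet_measures C"
  then obtain B y where sets_M: "sets M = sets borel" and space_M: "emeasure M (space M) = 1"
    and B: "B \<in> sets borel" "B \<subseteq> C" "emeasure M B = 1" and y: "has_barycenter M y"
    unfolding choquet_measures_def by blast
  interpret prob_space M
    by (rule prob_spaceI) (fact space_M)
  have "AE x in M. x \<in> B"
    using B sets_M by (subst AE_in_set_eq_1) (simp_all add: emeasure_eq_measure)
  then have "AE x in M. x \<in> C"
    using B(2) by auto
  then show "barycenter M \<in> C"
    using has_barycenter_mem_convex[OF prob_space_axioms assms _ y] barycenter_eqI[OF y] by simp
qed

lemma choquet_set_iff_convex:
  "choquet_set (C :: 'a::euclidean_space set) \<longleftrightarrow> convex C"
  using choquet_set_imp_convex convex_imp_choquet_set by blast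

theorem mainTheorem3:
  fixes A :: "('a::euclidean_space) set"
  shows "choquet_hull A = convex hull A"
  unfolding choquet_hull_def hull_def choquet_set_iff_convex ..

end
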